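(* Let $\varpi$ be a minuscule fundamental weight, $\bar\phi\in W/W_{P_\varpi}$, $\phi$ the minimal length element of $\bar\phi$, $\phi=s_{\gamma_1}\cdots s_{\gamma_n}$ a reduced expression with simple roots $\gamma_k$, and $\beta_k=i(\gamma_k)$. Let $\beta$ be the unique simple root such that $\langle\beta^\vee,i(\varpi)\rangle=1$. Then $\beta_n=\beta$.
   Context: $G$ is a semisimple algebraic group with maximal torus $T$, Borel subgroup $B$, simple roots $S$, Weyl group $W$ with longest element $w_0$; $\alpha^\vee$ denotes the coroot of $\alpha$. The Weyl involution $i$ sends a simple root $\gamma$ to $-w_0(\gamma)$ and a fundamental weight $\varpi$ to $-w_0(\varpi)$. A fundamental weight $\varpi$ is minuscule if $\langle\alpha^\vee,\varpi\rangle\le1$ for all positive roots $\alpha$; $P_\varpi$ is the associated maximal parabolic subgroup and $W_{P_\varpi}$ its Weyl group. *)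

theory Defs
  imports "HOL-Analysis.Analysis"
begin

text \<open>Root data of a semisimple group, realised (as usual) in the real
Euclidean space spanned by the characters of the maximal torus.\<close>

definition cpair :: "'a::real_inner \<Rightarrow> 'a \<Rightarrow> real" where
  "cpair \<alpha> x = 2 * (x \<bullet> \<alpha>) / (\<alpha> \<bullet> \<alpha>)"   \<comment> \<open>the pairing between coroot of alpha and x\<close>

definition refl :: "'a::real_inner \<Rightarrow> 'a \<Rightarrow> 'a" where
  "refl \<alpha> x = x - cpair \<alpha> x *\<^sub>R \<alpha>"

definition root_system :: "'a::euclidean_space set \<Rightarrow> bool" where
  "root_system R \<longleftrightarrow> finite R \<and> 0 \<notin> R \<and> span R = UNIV \<and>
     (\<forall>\<alpha>\<in>R. \<forall>\<beta>\<in>R. refl \<alpha> \<beta> \<in> R) \<and>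
     (\<forall>\<alpha>\<in>R. \<forall>\<beta>\<in>R. cpair \<alpha> \<beta> \<in> \<int>) \<and>
     (\<forall>\<alpha>\<in>R. \<forall>c::real. c *\<^sub>R \<alpha> \<in> R \<longrightarrow> c = 1 \<or> c = -1)"

definition is_base :: "'a::euclidean_space set \<Rightarrow> 'a set \<Rightarrow> bool" where
  "is_base R S \<longleftrightarrow> S \<subseteq> R \<and> independent S \<and>
     (\<forall>\<alpha>\<in>R. \<exists>c::'a \<Rightarrow> int. \<alpha> = (\<Sum>\<gamma>\<in>S. of_int (c \<gamma>) *\<^sub>R \<gamma>) \<and>
         ((\<forall>\<gamma>\<in>S. c \<gamma> \<ge> 0) \<or> (\<forall>\<gamma>\<in>S. c \<gamma> \<le> 0)))"

definition pos_roots :: "'a::euclidean_space set \<Rightarrow> 'a set \<Rightarrow> 'a set" where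
  "pos_roots R S = {\<alpha>\<in>R. \<exists>c::'a \<Rightarrow> int. \<alpha> = (\<Sum>\<gamma>\<in>S. of_int (c \<gamma>) *\<^sub>R \<gamma>) \<and>
         (\<forall>\<gamma>\<in>S. c \<gamma> \<ge> 0)}"

definition word_fun :: "'a::real_inner list \<Rightarrow> 'a \<Rightarrow> 'a" where
  "word_fun xs = foldr (\<lambda>\<gamma> f. refl \<gamma> \<circ> f) xs id"

definition weyl_group :: "'a::euclidean_space set \<Rightarrow> ('a \<Rightarrow> 'a) set" where
  "weyl_group R = {word_fun xs | xs. set xs \<subseteq> R}"

definition wlen :: "'a::euclidean_space set \<Rightarrow> ('a \<Rightarrow> 'a) \<Rightarrow> nat" where
  "wlen S w = (LEAST n. \<exists>xs. set xs \<subseteq> S \<and> length xs = n \<and> word_fun xs = w)"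

definition reduced_expr :: "'a::euclidean_space set \<Rightarrow> ('a \<Rightarrow> 'a) \<Rightarrow> 'a list \<Rightarrow> bool" where
  "reduced_expr S w xs \<longleftrightarrow> set xs \<subseteq> S \<and> word_fun xs = w \<and> length xs = wlen S w"

definition longest_elem :: "'a::euclidean_space set \<Rightarrow> 'a set \<Rightarrow> ('a \<Rightarrow> 'a) \<Rightarrow> bool" where
  "longest_elem R S w0 \<longleftrightarrow> w0 \<in> weyl_group R \<and> (\<forall>w\<in>weyl_group R. wlen S w \<le> wlen S w0)"

definition weyl_inv :: "('a::real_vector \<Rightarrow> 'a) \<Rightarrow> 'a \<Rightarrow> 'a" where
  "weyl_inv w0 x = - w0 x"

definition fund_weight :: "'a::euclidean_space set \<Rightarrow> 'a \<Rightarrow> bool" where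
  "fund_weight S \<omega> \<longleftrightarrow> (\<exists>\<alpha>\<in>S. \<forall>\<gamma>\<in>S. cpair \<gamma> \<omega> = (if \<gamma> = \<alpha> then 1 else 0))"

definition minuscule :: "'a::euclidean_space set \<Rightarrow> 'a set \<Rightarrow> 'a \<Rightarrow> bool" where
  "minuscule R S \<omega> \<longleftrightarrow> fund_weight S \<omega> \<and> (\<forall>\<alpha>\<in>pos_roots R S. cpair \<alpha> \<omega> \<le> 1)"

text \<open>Weyl group W_P of the maximal parabolic P_varpi: generated by the simple
reflections s_gamma with gamma simple and orthogonal to varpi.\<close>
definition parabolic_weyl :: "'a::euclidean_space set \<Rightarrow> 'a \<Rightarrow> ('a \<Rightarrow> 'a) set" where
  "parabolic_weyl S \<omega> = {word_fun xs | xs. set xs \<subseteq> {\<gamma>\<in>S. cpair \<gamma> \<omega> = 0}}"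

definition weyl_cosets :: "'a::euclidean_space set \<Rightarrow> 'a set \<Rightarrow> 'a \<Rightarrow> ('a \<Rightarrow> 'a) set set" where
  "weyl_cosets R S \<omega> = {(\<lambda>v. w \<circ> v) ` parabolic_weyl S \<omega> | w. w \<in> weyl_group R}"

end

theory Submission
  imports Defs
begin

text \<open>
  Let \<alpha> be the simple root dual to \<omega>. The last letter \<gamma> of a reduced word for the
  minimal coset representative \<phi> must be \<alpha>: for any other simple root, the reflection
  in \<gamma> lies in W_P, so \<phi> composed with it would be a shorter element of the same coset.
  The Weyl involution i = -w0 preserves the pairing and permutes the simple roots, so
  \<beta> = i(\<delta>) for a simple root \<delta> with cpair \<delta> \<omega> = cpair \<beta> (i \<omega>) = 1, i.e. \<delta> = \<alpha>.
  Finally, i permutes the simple roots because w0 sends every simple root, hence every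
  positive root, to a negative one (otherwise the deletion condition would produce a word
  for w0 shorter than its length), so i permutes the positive roots; a linear bijection of
  the positive roots preserves the extremal ones, and these are exactly the simple roots.
\<close>

section \<open>Reflections and words in reflections\<close>

lemma linear_refl: "linear (refl a)"
  unfolding refl_def cpair_def
  by (rule linearI) (auto simp: inner_add_left algebra_simps add_divide_distrib)

lemma refl_inner_refl: "refl a x \<bullet> refl a y = x \<bullet> y"
proof (cases "a = 0")
  case False
  then have "a \<bullet> a \<noteq> 0" by simp
  then show ?thesis unfolding refl_def cpair_def
    by (simp add: inner_diff_left inner_diff_right algebra_simps) (simp add: field_simps inner_commute)
qed (simp add: refl_def cpair_def)

lemma refl_refl [simp]: "refl a (refl a x) = x"
proof (cases "a = 0")
  case False
  then have "a \<bullet> a \<noteq> 0" by simp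
  then show ?thesis unfolding refl_def cpair_def by (simp add: inner_diff_left algebra_simps)
qed (simp add: refl_def cpair_def)

lemma refl_self: "a \<noteq> 0 \<Longrightarrow> refl a a = - a"
  unfolding refl_def cpair_def by (simp add: algebra_simps scaleR_2)

lemma refl_uminus [simp]: "refl (- a) = refl a"
  unfolding refl_def cpair_def by (auto simp: fun_eq_iff)

lemma cpair_uminus [simp]: "cpair (- a) (- x) = cpair a x"
  by (simp add: cpair_def)

lemma word_fun_Nil [simp]: "word_fun [] = id"
  by (simp add: word_fun_def)

lemma word_fun_Cons [simp]: "word_fun (a # xs) = refl a \<circ> word_fun xs"
  by (simp add: word_fun_def)

lemma word_fun_append: "word_fun (xs @ ys) = word_fun xs \<circ> word_fun ys"
  by (induction xs) auto

lemma linear_word_fun: "linear (word_fun xs)"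
  by (induction xs) (auto intro: linear_compose[unfolded o_def] linear_refl simp: linear_id[unfolded id_def])

lemma word_fun_inner: "word_fun xs x \<bullet> word_fun xs y = x \<bullet> y"
  by (induction xs) (auto simp: refl_inner_refl)

lemma word_fun_rev_word_fun [simp]: "word_fun (rev xs) (word_fun xs x) = x"
  by (induction xs arbitrary: x) (auto simp: word_fun_append)

lemma cpair_word_fun [simp]: "cpair (word_fun xs a) (word_fun xs x) = cpair a x"
  by (simp add: cpair_def word_fun_inner)

lemma word_fun_refl_conj: "word_fun xs \<circ> refl a = refl (word_fun xs a) \<circ> word_fun xs"
proof -
  interpret linear "word_fun xs" by (rule linear_word_fun)
  show ?thesis by (simp add: fun_eq_iff refl_def diff scale)
qed

lemma refl_word_fun: "refl (word_fun xs a) = word_fun (xs @ a # rev xs)"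
proof
  fix x
  have "refl (word_fun xs a) x = refl (word_fun xs a) (word_fun xs (word_fun (rev xs) x))"
    using word_fun_rev_word_fun[of "rev xs"] by simp
  also have "\<dots> = word_fun (xs @ a # rev xs) x"
    using word_fun_refl_conj[of xs a] by (simp add: fun_eq_iff word_fun_append)
  finally show "refl (word_fun xs a) x = word_fun (xs @ a # rev xs) x" .
qed

lemma weyl_group_linear: "w \<in> weyl_group R \<Longrightarrow> linear w"
  by (auto simp: weyl_group_def linear_word_fun)

lemma weyl_group_inj: "w \<in> weyl_group R \<Longrightarrow> inj w"
proof -
  assume "w \<in> weyl_group R"
  then obtain xs where "w = word_fun xs" by (auto simp: weyl_group_def)
  then show "inj w" by (metis inj_on_inverseI word_fun_rev_word_fun)
qed

lemma cpair_weyl_group: "w \<in> weyl_group R \<Longrightarrow> cpair (w a) (w x) = cpair a x"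
  by (auto simp: weyl_group_def)

lemma linear_weyl_inv: "w0 \<in> weyl_group R \<Longrightarrow> linear (weyl_inv w0)"
  unfolding weyl_inv_def[abs_def] by (intro linear_compose_neg weyl_group_linear)

lemma inj_weyl_inv: "w0 \<in> weyl_group R \<Longrightarrow> inj (weyl_inv w0)"
  using weyl_group_inj by (auto simp: inj_def weyl_inv_def)

lemma cpair_weyl_inv: "w0 \<in> weyl_group R \<Longrightarrow> cpair (weyl_inv w0 a) (weyl_inv w0 x) = cpair a x"
  by (simp add: weyl_inv_def cpair_weyl_group)

section \<open>Length and minimal coset representatives\<close>

lemma wlen_le: "set xs \<subseteq> S \<Longrightarrow> wlen S (word_fun xs) \<le> length xs"
  unfolding wlen_def by (rule Least_le) blast

lemma reduced_expr_exists: "set xs \<subseteq> S \<Longrightarrow> \<exists>ys. reduced_expr S (word_fun xs) ys"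
proof -
  assume "set xs \<subseteq> S"
  then have "\<exists>n ys. set ys \<subseteq> S \<and> length ys = n \<and> word_fun ys = word_fun xs"
    by blast
  from LeastI_ex[OF this] show ?thesis
    unfolding reduced_expr_def wlen_def by blast
qed

lemma min_coset_rep_last_not_parabolic:
  assumes "\<phi>bar \<in> weyl_cosets R S \<omega>" and "\<phi> \<in> \<phi>bar" and "\<forall>\<psi>\<in>\<phi>bar. wlen S \<phi> \<le> wlen S \<psi>"
    and "reduced_expr S \<phi> \<gamma>s" and "\<gamma>s \<noteq> []"
  shows "cpair (last \<gamma>s) \<omega> \<noteq> 0"
proof
  assume last_parabolic: "cpair (last \<gamma>s) \<omega> = 0"
  define \<gamma> where "\<gamma> = last \<gamma>s"
  have \<gamma>s: "\<gamma>s = butlast \<gamma>s @ [\<gamma>]" using \<open>\<gamma>s \<noteq> []\<close> by (simp add: \<gamma>_def)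
  obtain w where w: "\<phi>bar = (\<lambda>v. w \<circ> v) ` parabolic_weyl S \<omega>"
    using assms(1) by (auto simp: weyl_cosets_def)
  obtain xs where xs: "set xs \<subseteq> {\<delta>\<in>S. cpair \<delta> \<omega> = 0}" and \<phi>: "\<phi> = w \<circ> word_fun xs"
    using assms(2) by (auto simp: w parabolic_weyl_def)
  have "set \<gamma>s \<subseteq> S" and "word_fun \<gamma>s = \<phi>" and "length \<gamma>s = wlen S \<phi>"
    using assms(4) by (auto simp: reduced_expr_def)
  have "set (xs @ [\<gamma>]) \<subseteq> {\<delta>\<in>S. cpair \<delta> \<omega> = 0}"
    using xs last_parabolic \<open>set \<gamma>s \<subseteq> S\<close> \<open>\<gamma>s \<noteq> []\<close> by (auto simp: \<gamma>_def)
  then have "w \<circ> word_fun (xs @ [\<gamma>]) \<in> \<phi>bar"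
    unfolding w parabolic_weyl_def by blast
  moreover have "w \<circ> word_fun (xs @ [\<gamma>]) = word_fun (butlast \<gamma>s)"
  proof -
    have "\<phi> = word_fun (butlast \<gamma>s) \<circ> refl \<gamma>"
      using \<open>word_fun \<gamma>s = \<phi>\<close> \<gamma>s by (metis word_fun_append word_fun_Cons word_fun_Nil comp_id)
    then show ?thesis by (auto simp: fun_eq_iff \<phi> word_fun_append)
  qed
  ultimately have "wlen S \<phi> \<le> wlen S (word_fun (butlast \<gamma>s))"
    using assms(3) by auto
  also have "\<dots> \<le> length (butlast \<gamma>s)"
    using \<open>set \<gamma>s \<subseteq> S\<close> by (intro wlen_le) (meson in_set_butlastD subset_iff)
  finally have "length \<gamma>s \<le> length (butlast \<gamma>s)" using \<open>length \<gamma>s = wlen S \<phi>\<close> by simp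
  moreover have "length (butlast \<gamma>s) < length \<gamma>s" using \<open>\<gamma>s \<noteq> []\<close> by simp
  ultimately show False by linarith
qed

section \<open>Positive roots and the longest element\<close>

locale based_root_system =
  fixes R S :: "'a::euclidean_space set"
  assumes finite_roots: "finite R"
    and zero_not_root: "0 \<notin> R"
    and refl_root: "\<alpha> \<in> R \<Longrightarrow> \<beta> \<in> R \<Longrightarrow> refl \<alpha> \<beta> \<in> R"
    and cpair_root_Ints: "\<alpha> \<in> R \<Longrightarrow> \<beta> \<in> R \<Longrightarrow> cpair \<alpha> \<beta> \<in> \<int>"
    and root_multiple: "\<alpha> \<in> R \<Longrightarrow> c *\<^sub>R \<alpha> \<in> R \<Longrightarrow> c = 1 \<or> c = -1"
    and simple_roots: "S \<subseteq> R"
    and independent_simple_roots: "independent S"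
    and root_simple_expansion: "\<alpha> \<in> R \<Longrightarrow> \<exists>c::'a \<Rightarrow> int. \<alpha> = (\<Sum>\<gamma>\<in>S. of_int (c \<gamma>) *\<^sub>R \<gamma>) \<and>
         ((\<forall>\<gamma>\<in>S. c \<gamma> \<ge> 0) \<or> (\<forall>\<gamma>\<in>S. c \<gamma> \<le> 0))"

lemma based_root_systemI: "root_system R \<Longrightarrow> is_base R S \<Longrightarrow> based_root_system R S"
  by unfold_locales (auto simp: root_system_def is_base_def)

context based_root_system
begin

lemma finite_simple_roots: "finite S"
  using finite_roots simple_roots by (rule finite_subset[rotated])

lemma uminus_root: "\<beta> \<in> R \<Longrightarrow> - \<beta> \<in> R"
  by (metis refl_root refl_self zero_not_root)

lemma word_fun_root: "set xs \<subseteq> R \<Longrightarrow> \<beta> \<in> R \<Longrightarrow> word_fun xs \<beta> \<in> R"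
  by (induction xs) (auto intro: refl_root)

lemma weyl_group_root: "w \<in> weyl_group R \<Longrightarrow> \<beta> \<in> R \<Longrightarrow> w \<beta> \<in> R"
  by (auto simp: weyl_group_def intro: word_fun_root)

text \<open>The coordinate functionals dual to the simple roots; off span S they are
  an arbitrary linear extension.\<close>

definition coord :: "'a \<Rightarrow> 'a \<Rightarrow> real" where
  "coord \<gamma> = (SOME f. linear f \<and> (\<forall>\<gamma>'\<in>S. f \<gamma>' = (if \<gamma>' = \<gamma> then 1 else 0)))"

lemma linear_coord: "linear (coord \<gamma>)"
  and coord_simple_root: "\<gamma>' \<in> S \<Longrightarrow> coord \<gamma> \<gamma>' = (if \<gamma>' = \<gamma> then 1 else 0)"
proof -
  have "\<exists>f. linear f \<and> (\<forall>\<gamma>'\<in>S. f \<gamma>' = (if \<gamma>' = \<gamma> then (1::real) else 0))"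
    using independent_simple_roots by (rule linear_independent_extend)
  then have "linear (coord \<gamma>) \<and> (\<forall>\<gamma>'\<in>S. coord \<gamma> \<gamma>' = (if \<gamma>' = \<gamma> then 1 else 0))"
    unfolding coord_def by (rule someI_ex)
  then show "linear (coord \<gamma>)" "\<gamma>' \<in> S \<Longrightarrow> coord \<gamma> \<gamma>' = (if \<gamma>' = \<gamma> then 1 else 0)"
    by auto
qed

lemmas coord_diff = linear_diff[OF linear_coord]
  and coord_uminus [simp] = linear_neg[OF linear_coord]
  and coord_scaleR = linear_scale[OF linear_coord]
  and coord_sum = linear_sum[OF linear_coord]

lemma coord_simple_expansion:
  assumes "\<gamma> \<in> S"
  shows "coord \<gamma> (\<Sum>\<gamma>'\<in>S. c \<gamma>' *\<^sub>R \<gamma>') = c \<gamma>"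
proof -
  have "coord \<gamma> (\<Sum>\<gamma>'\<in>S. c \<gamma>' *\<^sub>R \<gamma>') = (\<Sum>\<gamma>'\<in>S. c \<gamma>' * coord \<gamma> \<gamma>')"
    by (simp add: coord_sum coord_scaleR)
  also have "\<dots> = (\<Sum>\<gamma>'\<in>S. if \<gamma>' = \<gamma> then c \<gamma> else 0)"
    by (rule sum.cong) (auto simp: coord_simple_root)
  finally show ?thesis
    using assms finite_simple_roots by simp
qed

lemma root_coord_signs:
  assumes "\<beta> \<in> R"
  shows "(\<forall>\<gamma>\<in>S. 0 \<le> coord \<gamma> \<beta>) \<or> (\<forall>\<gamma>\<in>S. coord \<gamma> \<beta> \<le> 0)"
proof -
  obtain c :: "'a \<Rightarrow> int" where c: "\<beta> = (\<Sum>\<gamma>\<in>S. of_int (c \<gamma>) *\<^sub>R \<gamma>)"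
    and signs: "(\<forall>\<gamma>\<in>S. c \<gamma> \<ge> 0) \<or> (\<forall>\<gamma>\<in>S. c \<gamma> \<le> 0)"
    using root_simple_expansion[OF assms] by blast
  have "coord \<gamma> \<beta> = of_int (c \<gamma>)" if "\<gamma> \<in> S" for \<gamma>
    using coord_simple_expansion[OF that] c by simp
  with signs show ?thesis by auto
qed

lemma root_coord_expansion: "\<beta> \<in> R \<Longrightarrow> \<beta> = (\<Sum>\<gamma>\<in>S. coord \<gamma> \<beta> *\<^sub>R \<gamma>)"
proof -
  assume "\<beta> \<in> R"
  then obtain c :: "'a \<Rightarrow> int" where c: "\<beta> = (\<Sum>\<gamma>\<in>S. of_int (c \<gamma>) *\<^sub>R \<gamma>)"
    using root_simple_expansion by blast
  also have "\<dots> = (\<Sum>\<gamma>\<in>S. coord \<gamma> \<beta> *\<^sub>R \<gamma>)"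
    by (rule sum.cong) (auto simp: c coord_simple_expansion)
  finally show ?thesis .
qed

lemma pos_roots_iff: "\<beta> \<in> pos_roots R S \<longleftrightarrow> \<beta> \<in> R \<and> (\<forall>\<gamma>\<in>S. 0 \<le> coord \<gamma> \<beta>)"
proof
  assume "\<beta> \<in> pos_roots R S"
  then obtain c :: "'a \<Rightarrow> int" where "\<beta> \<in> R" "\<beta> = (\<Sum>\<gamma>\<in>S. of_int (c \<gamma>) *\<^sub>R \<gamma>)"
    "\<forall>\<gamma>\<in>S. c \<gamma> \<ge> 0"
    by (auto simp: pos_roots_def)
  then show "\<beta> \<in> R \<and> (\<forall>\<gamma>\<in>S. 0 \<le> coord \<gamma> \<beta>)"
    by (simp add: coord_simple_expansion)
next
  assume \<beta>: "\<beta> \<in> R \<and> (\<forall>\<gamma>\<in>S. 0 \<le> coord \<gamma> \<beta>)"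
  then obtain c :: "'a \<Rightarrow> int" where c: "\<beta> = (\<Sum>\<gamma>\<in>S. of_int (c \<gamma>) *\<^sub>R \<gamma>)"
    using root_simple_expansion by blast
  with \<beta> have "\<forall>\<gamma>\<in>S. c \<gamma> \<ge> 0"
    by (metis coord_simple_expansion of_int_0_le_iff)
  with \<beta> c show "\<beta> \<in> pos_roots R S"
    by (auto simp: pos_roots_def)
qed

lemma neg_roots_iff: "- \<beta> \<in> pos_roots R S \<longleftrightarrow> \<beta> \<in> R \<and> (\<forall>\<gamma>\<in>S. coord \<gamma> \<beta> \<le> 0)"
  using uminus_root[of \<beta>] uminus_root[of "- \<beta>"] by (auto simp: pos_roots_iff)

lemma root_pos_or_neg: "\<beta> \<in> R \<Longrightarrow> \<beta> \<in> pos_roots R S \<or> - \<beta> \<in> pos_roots R S"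
  using root_coord_signs pos_roots_iff neg_roots_iff by blast

lemma pos_root_not_neg: "\<beta> \<in> pos_roots R S \<Longrightarrow> - \<beta> \<notin> pos_roots R S"
proof
  assume "\<beta> \<in> pos_roots R S" "- \<beta> \<in> pos_roots R S"
  then have "\<beta> \<in> R" and "\<forall>\<gamma>\<in>S. coord \<gamma> \<beta> = 0"
    by (auto simp: pos_roots_iff neg_roots_iff intro: order.antisym)
  then have "\<beta> = 0" using root_coord_expansion[OF \<open>\<beta> \<in> R\<close>] by simp
  with \<open>\<beta> \<in> R\<close> zero_not_root show False by simp
qed

lemma simple_pos_root: "\<alpha> \<in> S \<Longrightarrow> \<alpha> \<in> pos_roots R S"
  using simple_roots by (auto simp: pos_roots_iff coord_simple_root)

lemma pos_root_eq_simple: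
  assumes "\<beta> \<in> pos_roots R S" and "\<alpha> \<in> S" and "\<forall>\<gamma>\<in>S - {\<alpha>}. coord \<gamma> \<beta> = 0"
  shows "\<beta> = \<alpha>"
proof -
  have "\<beta> \<in> R" using assms(1) by (simp add: pos_roots_iff)
  have "\<beta> = (\<Sum>\<gamma>\<in>S. coord \<gamma> \<beta> *\<^sub>R \<gamma>)"
    using \<open>\<beta> \<in> R\<close> by (rule root_coord_expansion)
  also have "\<dots> = coord \<alpha> \<beta> *\<^sub>R \<alpha>"
    using assms(2,3) finite_simple_roots by (subst sum.remove[of _ \<alpha>]) auto
  finally have \<beta>: "\<beta> = coord \<alpha> \<beta> *\<^sub>R \<alpha>" .
  then have "coord \<alpha> \<beta> = 1 \<or> coord \<alpha> \<beta> = -1"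
    using root_multiple[of \<alpha> "coord \<alpha> \<beta>"] \<open>\<beta> \<in> R\<close> assms(2) simple_roots by auto
  moreover have "0 \<le> coord \<alpha> \<beta>" using assms(1,2) by (simp add: pos_roots_iff)
  ultimately show ?thesis using \<beta> by auto
qed

lemma refl_simple_pos_root:
  assumes "\<alpha> \<in> S" and "\<beta> \<in> pos_roots R S" and "\<beta> \<noteq> \<alpha>"
  shows "refl \<alpha> \<beta> \<in> pos_roots R S"
proof -
  have "\<beta> \<in> R" using assms(2) by (simp add: pos_roots_iff)
  then have root: "refl \<alpha> \<beta> \<in> R"
    using assms(1) simple_roots by (auto intro: refl_root)
  obtain \<gamma> where \<gamma>: "\<gamma> \<in> S - {\<alpha>}" "coord \<gamma> \<beta> \<noteq> 0"
    using pos_root_eq_simple assms by blast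
  have "coord \<gamma> (refl \<alpha> \<beta>) = coord \<gamma> \<beta>"
    using \<gamma>(1) assms(1) by (auto simp: refl_def coord_diff coord_scaleR coord_simple_root)
  also have "\<dots> > 0"
    using \<gamma> assms(2) by (auto simp: pos_roots_iff order.order_iff_strict)
  finally show ?thesis
    using root_pos_or_neg[OF root] \<gamma>(1) neg_roots_iff by fastforce
qed

lemma pos_root_inner_simple:
  assumes "\<beta> \<in> pos_roots R S"
  shows "\<exists>\<gamma>\<in>S. 0 < \<beta> \<bullet> \<gamma>"
proof (rule ccontr)
  assume "\<not> (\<exists>\<gamma>\<in>S. 0 < \<beta> \<bullet> \<gamma>)"
  then have nonpos: "\<forall>\<gamma>\<in>S. \<beta> \<bullet> \<gamma> \<le> 0" by auto
  have "\<beta> \<in> R" using assms by (simp add: pos_roots_iff)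
  then have "0 < \<beta> \<bullet> \<beta>" using zero_not_root by auto
  also have "\<beta> \<bullet> \<beta> = (\<Sum>\<gamma>\<in>S. coord \<gamma> \<beta> * (\<beta> \<bullet> \<gamma>))"
    by (subst (2) root_coord_expansion[OF \<open>\<beta> \<in> R\<close>]) (simp add: inner_sum_right)
  also have "\<dots> \<le> 0"
    using assms nonpos by (intro sum_nonpos mult_nonneg_nonpos) (auto simp: pos_roots_iff)
  finally show False by simp
qed

definition height :: "'a \<Rightarrow> real" where
  "height x = (\<Sum>\<gamma>\<in>S. coord \<gamma> x)"

lemma height_pos:
  assumes "\<beta> \<in> pos_roots R S"
  shows "0 < height \<beta>"
proof -
  have "\<beta> \<in> R" and nonneg: "\<forall>\<gamma>\<in>S. 0 \<le> coord \<gamma> \<beta>"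
    using assms by (auto simp: pos_roots_iff)
  have "\<exists>\<gamma>\<in>S. coord \<gamma> \<beta> \<noteq> 0"
  proof (rule ccontr)
    assume "\<not> ?thesis"
    then have "\<beta> = 0" using root_coord_expansion[OF \<open>\<beta> \<in> R\<close>] by simp
    with \<open>\<beta> \<in> R\<close> zero_not_root show False by simp
  qed
  then obtain \<gamma> where "\<gamma> \<in> S" "coord \<gamma> \<beta> \<noteq> 0" ..
  then show ?thesis
    unfolding height_def using nonneg finite_simple_roots
    by (intro sum_pos2[of S \<gamma>]) (auto simp: order.order_iff_strict)
qed

lemma height_refl_simple: "\<gamma> \<in> S \<Longrightarrow> height (refl \<gamma> \<beta>) = height \<beta> - cpair \<gamma> \<beta>"
  using finite_simple_roots
  by (simp add: height_def refl_def coord_diff coord_scaleR coord_simple_root sum_subtractf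
      flip: sum_distrib_left)

lemma pos_root_simple_conj:
  assumes "\<beta> \<in> pos_roots R S"
  shows "\<exists>xs \<alpha>. set xs \<subseteq> S \<and> \<alpha> \<in> S \<and> \<beta> = word_fun xs \<alpha>"
proof -
  obtain n :: nat where "height \<beta> \<le> n" using real_arch_simple by blast
  then show ?thesis using assms
  proof (induction n arbitrary: \<beta>)
    case 0
    then show ?case using height_pos by force
  next
    case (Suc n)
    show ?case
    proof (cases "\<beta> \<in> S")
      case True
      then show ?thesis by (intro exI[of _ "[]"] exI[of _ \<beta>]) auto
    next
      case False
      obtain \<gamma> where \<gamma>: "\<gamma> \<in> S" "0 < \<beta> \<bullet> \<gamma>"
        using pos_root_inner_simple Suc.prems(2) by blast
      have "\<beta> \<in> R" "\<gamma> \<in> R" using Suc.prems(2) \<gamma>(1) simple_roots by (auto simp: pos_roots_iff)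
      have "0 < \<gamma> \<bullet> \<gamma>" using \<open>\<gamma> \<in> R\<close> zero_not_root by auto
      then have "0 < cpair \<gamma> \<beta>"
        using \<gamma>(2) by (simp add: cpair_def)
      moreover have "cpair \<gamma> \<beta> \<in> \<int>" using cpair_root_Ints \<open>\<beta> \<in> R\<close> \<open>\<gamma> \<in> R\<close> by blast
      ultimately have "1 \<le> cpair \<gamma> \<beta>" using Ints_nonzero_abs_ge1 by fastforce
      then have "height (refl \<gamma> \<beta>) \<le> n"
        using Suc.prems(1) height_refl_simple[OF \<gamma>(1)] by simp
      moreover have "refl \<gamma> \<beta> \<in> pos_roots R S"
        using refl_simple_pos_root \<gamma>(1) Suc.prems(2) False by blast
      ultimately obtain xs \<alpha> where "set xs \<subseteq> S" "\<alpha> \<in> S" "refl \<gamma> \<beta> = word_fun xs \<alpha>"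
        using Suc.IH by blast
      then have "\<beta> = word_fun (\<gamma> # xs) \<alpha>" by (metis comp_apply word_fun_Cons refl_refl)
      then show ?thesis using \<gamma>(1) \<open>set xs \<subseteq> S\<close> \<open>\<alpha> \<in> S\<close> by (intro exI[of _ "\<gamma> # xs"] exI[of _ \<alpha>]) auto
    qed
  qed
qed

lemma refl_simple_word: "\<beta> \<in> R \<Longrightarrow> \<exists>zs. set zs \<subseteq> S \<and> word_fun zs = refl \<beta>"
proof -
  assume "\<beta> \<in> R"
  then obtain \<beta>' where "\<beta>' \<in> pos_roots R S" and "refl \<beta>' = refl \<beta>"
    using root_pos_or_neg refl_uminus by metis
  then obtain xs \<alpha> where "set xs \<subseteq> S" "\<alpha> \<in> S" "refl \<beta> = refl (word_fun xs \<alpha>)"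
    using pos_root_simple_conj by metis
  then show ?thesis by (intro exI[of _ "xs @ \<alpha> # rev xs"]) (auto simp: refl_word_fun)
qed

lemma weyl_group_simple_word: "w \<in> weyl_group R \<Longrightarrow> \<exists>zs. set zs \<subseteq> S \<and> word_fun zs = w"
proof -
  have "\<exists>zs. set zs \<subseteq> S \<and> word_fun zs = word_fun xs" if "set xs \<subseteq> R" for xs
    using that
  proof (induction xs)
    case (Cons a xs)
    then obtain ys zs where "set ys \<subseteq> S" "word_fun ys = refl a" "set zs \<subseteq> S" "word_fun zs = word_fun xs"
      using refl_simple_word by (metis insert_subset list.set(2))
    then show ?case by (intro exI[of _ "ys @ zs"]) (auto simp: word_fun_append)
  qed (intro exI[of _ "[]"], simp)
  then show "w \<in> weyl_group R \<Longrightarrow> ?thesis" by (auto simp: weyl_group_def)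
qed

lemma deletion_condition:
  assumes "set ys \<subseteq> S" and "\<alpha> \<in> S" and "- word_fun ys \<alpha> \<in> pos_roots R S"
  shows "\<exists>zs. set zs \<subseteq> S \<and> length zs < length ys \<and> word_fun zs = word_fun ys \<circ> refl \<alpha>"
  using assms
proof (induction ys)
  case Nil
  then show ?case using pos_root_not_neg simple_pos_root by fastforce
next
  case (Cons b ys)
  show ?case
  proof (cases "- word_fun ys \<alpha> \<in> pos_roots R S")
    case True
    moreover have "set ys \<subseteq> S" using Cons.prems(1) by simp
    ultimately obtain zs where "set zs \<subseteq> S" "length zs < length ys" "word_fun zs = word_fun ys \<circ> refl \<alpha>"
      using Cons.IH Cons.prems(2) by blast
    then show ?thesis using Cons.prems(1) by (intro exI[of _ "b # zs"]) auto
  next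
    case False
    have "word_fun ys \<alpha> \<in> R"
      using Cons.prems(1,2) simple_roots by (intro word_fun_root) auto
    then have "word_fun ys \<alpha> \<in> pos_roots R S"
      using False root_pos_or_neg by blast
    moreover have "refl b (word_fun ys \<alpha>) \<notin> pos_roots R S"
      using Cons.prems(3) pos_root_not_neg by auto
    ultimately have "word_fun ys \<alpha> = b"
      using refl_simple_pos_root Cons.prems(1) by auto
    then have "word_fun (b # ys) \<circ> refl \<alpha> = word_fun ys"
      using word_fun_refl_conj[of ys \<alpha>] by (simp add: fun_eq_iff)
    moreover have "set ys \<subseteq> S" using Cons.prems(1) by simp
    ultimately show ?thesis by (metis length_Cons lessI)
  qed
qed

lemma longest_elem_simple_root:
  assumes longest: "longest_elem R S w0" and "\<alpha> \<in> S"
  shows "weyl_inv w0 \<alpha> \<in> pos_roots R S"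
proof (rule ccontr)
  assume not_pos: "weyl_inv w0 \<alpha> \<notin> pos_roots R S"
  have w0: "w0 \<in> weyl_group R" and longer: "\<forall>w\<in>weyl_group R. wlen S w \<le> wlen S w0"
    using longest by (simp_all add: longest_elem_def)
  obtain xs where xs: "set xs \<subseteq> S" "word_fun xs = w0"
    using weyl_group_simple_word[OF w0] by blast
  have "\<alpha> \<in> R" using \<open>\<alpha> \<in> S\<close> simple_roots by blast
  then have "w0 \<alpha> \<in> pos_roots R S"
    using not_pos weyl_group_root[OF w0] root_pos_or_neg unfolding weyl_inv_def by blast
  define w1 where "w1 = w0 \<circ> refl \<alpha>"
  have w1: "word_fun (xs @ [\<alpha>]) = w1" by (simp add: w1_def xs(2) word_fun_append)
  have "set (xs @ [\<alpha>]) \<subseteq> S" using xs(1) \<open>\<alpha> \<in> S\<close> by simp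
  then have "w1 \<in> weyl_group R"
    using w1 simple_roots unfolding weyl_group_def by blast
  then have "wlen S w1 \<le> wlen S w0" using longer by blast
  obtain ys where "reduced_expr S w1 ys"
    using reduced_expr_exists[OF \<open>set (xs @ [\<alpha>]) \<subseteq> S\<close>] w1 by metis
  then have ys: "set ys \<subseteq> S" "word_fun ys = w1" "length ys = wlen S w1"
    by (simp_all add: reduced_expr_def)
  have "\<alpha> \<noteq> 0" using \<open>\<alpha> \<in> R\<close> zero_not_root by auto
  then have "refl \<alpha> \<alpha> = - \<alpha>" by (rule refl_self)
  then have "- word_fun ys \<alpha> = w0 \<alpha>"
    using ys(2) linear_neg[OF weyl_group_linear[OF w0]] by (simp add: w1_def)
  then obtain zs where zs: "set zs \<subseteq> S" "length zs < length ys" "word_fun zs = w1 \<circ> refl \<alpha>"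
    using deletion_condition[OF ys(1) \<open>\<alpha> \<in> S\<close>] \<open>w0 \<alpha> \<in> pos_roots R S\<close> ys(2) by auto
  have "word_fun zs = w0" using zs(3) by (simp add: w1_def fun_eq_iff)
  then have "wlen S w0 \<le> length zs" using wlen_le[OF zs(1)] by simp
  with zs(2) ys(3) \<open>wlen S w1 \<le> wlen S w0\<close> show False by simp
qed

lemma longest_elem_pos_root:
  assumes longest: "longest_elem R S w0" and "\<beta> \<in> pos_roots R S"
  shows "weyl_inv w0 \<beta> \<in> pos_roots R S"
proof -
  have w0: "w0 \<in> weyl_group R" using longest by (simp add: longest_elem_def)
  have "\<beta> \<in> R" using assms(2) by (simp add: pos_roots_iff)
  then have "weyl_inv w0 \<beta> \<in> R"
    using weyl_group_root[OF w0] uminus_root by (simp add: weyl_inv_def)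
  moreover have "0 \<le> coord \<gamma> (weyl_inv w0 \<beta>)" if "\<gamma> \<in> S" for \<gamma>
  proof -
    interpret weyl_inv: linear "weyl_inv w0" using w0 by (rule linear_weyl_inv)
    have "coord \<gamma> (weyl_inv w0 \<beta>) = (\<Sum>\<delta>\<in>S. coord \<delta> \<beta> * coord \<gamma> (weyl_inv w0 \<delta>))"
      by (subst root_coord_expansion[OF \<open>\<beta> \<in> R\<close>])
        (simp add: weyl_inv.sum weyl_inv.scale coord_sum coord_scaleR)
    also have "\<dots> \<ge> 0"
      using assms(2) longest_elem_simple_root[OF longest] that
      by (intro sum_nonneg mult_nonneg_nonneg) (auto simp: pos_roots_iff)
    finally show ?thesis .
  qed
  ultimately show ?thesis by (simp add: pos_roots_iff)
qed

lemma longest_elem_permutes_pos_roots: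
  assumes "longest_elem R S w0"
  shows "weyl_inv w0 ` pos_roots R S = pos_roots R S"
proof (rule endo_inj_surj)
  show "finite (pos_roots R S)" using finite_roots by (simp add: pos_roots_def)
  show "weyl_inv w0 ` pos_roots R S \<subseteq> pos_roots R S"
    using longest_elem_pos_root[OF assms] by blast
  show "inj_on (weyl_inv w0) (pos_roots R S)"
    using inj_weyl_inv assms by (auto simp: longest_elem_def intro: inj_on_subset)
qed

text \<open>Comparing coordinates, some term of the sum has a nonzero \<alpha>-coordinate; as all terms
  have nonnegative coordinates, the corresponding u \<gamma> has no other nonzero coordinate.\<close>

lemma simple_root_extremal:
  assumes "\<alpha> \<in> S" and u: "\<And>\<gamma>. \<gamma> \<in> S \<Longrightarrow> u \<gamma> \<in> pos_roots R S"
    and c: "\<And>\<gamma>. \<gamma> \<in> S \<Longrightarrow> 0 \<le> c \<gamma>" and \<alpha>: "\<alpha> = (\<Sum>\<gamma>\<in>S. c \<gamma> *\<^sub>R u \<gamma>)"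
  shows "\<exists>\<gamma>\<in>S. u \<gamma> = \<alpha>"
proof -
  have coord_\<alpha>: "coord \<delta> \<alpha> = (\<Sum>\<gamma>\<in>S. c \<gamma> * coord \<delta> (u \<gamma>))" for \<delta>
    by (subst \<alpha>) (simp add: coord_sum coord_scaleR)
  have nonneg: "0 \<le> c \<gamma> * coord \<delta> (u \<gamma>)" if "\<gamma> \<in> S" "\<delta> \<in> S" for \<gamma> \<delta>
    using that u c by (simp add: pos_roots_iff)
  have "(\<Sum>\<gamma>\<in>S. c \<gamma> * coord \<alpha> (u \<gamma>)) = 1"
    using coord_\<alpha>[of \<alpha>] \<open>\<alpha> \<in> S\<close> by (simp add: coord_simple_root)
  then obtain \<gamma> where "\<gamma> \<in> S" and "c \<gamma> * coord \<alpha> (u \<gamma>) \<noteq> 0"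
    by (metis (no_types, lifting) sum.neutral zero_neq_one)
  then have "0 < c \<gamma>" using c[of \<gamma>] by (auto simp: order.order_iff_strict)
  have "coord \<delta> (u \<gamma>) = 0" if "\<delta> \<in> S - {\<alpha>}" for \<delta>
  proof -
    have "(\<Sum>\<gamma>\<in>S. c \<gamma> * coord \<delta> (u \<gamma>)) = 0"
      using coord_\<alpha>[of \<delta>] that \<open>\<alpha> \<in> S\<close> by (auto simp: coord_simple_root)
    then have "c \<gamma> * coord \<delta> (u \<gamma>) = 0"
      using sum_nonneg_eq_0_iff[OF finite_simple_roots, of "\<lambda>\<gamma>. c \<gamma> * coord \<delta> (u \<gamma>)"]
        nonneg[of _ \<delta>] that \<open>\<gamma> \<in> S\<close> by auto
    with \<open>0 < c \<gamma>\<close> show ?thesis by simp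
  qed
  then have "u \<gamma> = \<alpha>"
    using pos_root_eq_simple[OF u[OF \<open>\<gamma> \<in> S\<close>] \<open>\<alpha> \<in> S\<close>] by blast
  with \<open>\<gamma> \<in> S\<close> show ?thesis ..
qed

lemma longest_elem_permutes_simple_roots:
  assumes longest: "longest_elem R S w0"
  shows "weyl_inv w0 ` S = S"
proof (rule endo_inj_surj[OF finite_simple_roots])
  have w0: "w0 \<in> weyl_group R" using longest by (simp add: longest_elem_def)
  interpret weyl_inv: linear "weyl_inv w0" using w0 by (rule linear_weyl_inv)
  show "inj_on (weyl_inv w0) S" using inj_weyl_inv[OF w0] by (rule inj_on_subset) simp
  show "weyl_inv w0 ` S \<subseteq> S"
  proof
    fix \<sigma>\<alpha> assume "\<sigma>\<alpha> \<in> weyl_inv w0 ` S"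
    then obtain \<alpha> where "\<alpha> \<in> S" and \<sigma>\<alpha>: "\<sigma>\<alpha> = weyl_inv w0 \<alpha>" ..
    define u where "u = inv_into (pos_roots R S) (weyl_inv w0)"
    have u: "u \<gamma> \<in> pos_roots R S \<and> weyl_inv w0 (u \<gamma>) = \<gamma>" if "\<gamma> \<in> S" for \<gamma>
      using simple_pos_root[OF that] longest_elem_permutes_pos_roots[OF longest]
      unfolding u_def by (metis f_inv_into_f inv_into_into)
    have "\<sigma>\<alpha> \<in> pos_roots R S"
      using \<sigma>\<alpha> longest_elem_simple_root[OF longest \<open>\<alpha> \<in> S\<close>] by simp
    then have "weyl_inv w0 \<alpha> = (\<Sum>\<gamma>\<in>S. coord \<gamma> \<sigma>\<alpha> *\<^sub>R \<gamma>)"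
      unfolding \<sigma>\<alpha>[symmetric] by (intro root_coord_expansion) (simp add: pos_roots_iff)
    also have "\<dots> = (\<Sum>\<gamma>\<in>S. coord \<gamma> \<sigma>\<alpha> *\<^sub>R weyl_inv w0 (u \<gamma>))"
      using u by (intro sum.cong) auto
    also have "\<dots> = weyl_inv w0 (\<Sum>\<gamma>\<in>S. coord \<gamma> \<sigma>\<alpha> *\<^sub>R u \<gamma>)"
      by (simp add: weyl_inv.sum weyl_inv.scale)
    finally have "\<alpha> = (\<Sum>\<gamma>\<in>S. coord \<gamma> \<sigma>\<alpha> *\<^sub>R u \<gamma>)"
      using inj_weyl_inv[OF w0] by (simp add: inj_eq)
    then obtain \<gamma> where "\<gamma> \<in> S" "u \<gamma> = \<alpha>"
      using simple_root_extremal[OF \<open>\<alpha> \<in> S\<close>, of u "\<lambda>\<gamma>. coord \<gamma> \<sigma>\<alpha>"] u \<open>\<sigma>\<alpha> \<in> pos_roots R S\<close>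
      by (auto simp: pos_roots_iff)
    then show "\<sigma>\<alpha> \<in> S" using u \<sigma>\<alpha> by metis
  qed
qed

end

theorem mainTheorem4:
  fixes R S :: "'a::euclidean_space set" and \<omega> \<beta> :: 'a
    and w0 \<phi> :: "'a \<Rightarrow> 'a" and \<phi>bar :: "('a \<Rightarrow> 'a) set" and \<gamma>s :: "'a list"
  assumes "root_system R" and "is_base R S"
    and "longest_elem R S w0"
    and "minuscule R S \<omega>"
    and "\<phi>bar \<in> weyl_cosets R S \<omega>"
    and "\<phi> \<in> \<phi>bar" and "\<forall>\<psi>\<in>\<phi>bar. wlen S \<phi> \<le> wlen S \<psi>"
    and "reduced_expr S \<phi> \<gamma>s" and "\<gamma>s \<noteq> []"
    and "\<beta> \<in> S" and "cpair \<beta> (weyl_inv w0 \<omega>) = 1"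
  shows "weyl_inv w0 (last \<gamma>s) = \<beta>"
proof -
  interpret based_root_system R S using assms(1,2) by (rule based_root_systemI)
  obtain \<alpha> where dual: "\<forall>\<gamma>\<in>S. cpair \<gamma> \<omega> = (if \<gamma> = \<alpha> then 1 else 0)"
    using assms(4) by (auto simp: minuscule_def fund_weight_def)
  have "last \<gamma>s \<in> S" using assms(8,9) by (auto simp: reduced_expr_def)
  moreover have "cpair (last \<gamma>s) \<omega> \<noteq> 0"
    using min_coset_rep_last_not_parabolic assms(5-9) by blast
  ultimately have last: "last \<gamma>s = \<alpha>" using dual by (auto split: if_splits)
  obtain \<delta> where "\<delta> \<in> S" and \<beta>: "\<beta> = weyl_inv w0 \<delta>"
    using longest_elem_permutes_simple_roots[OF assms(3)] \<open>\<beta> \<in> S\<close> by blast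
  have "cpair \<delta> \<omega> = 1"
    using assms(3,11) cpair_weyl_inv[of w0 R \<delta> \<omega>] by (simp add: \<beta> longest_elem_def)
  then have "\<delta> = \<alpha>" using dual \<open>\<delta> \<in> S\<close> by (auto split: if_splits)
  with \<beta> last show ?thesis by simp
qed

end
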